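(* Let $G=H\oplus_2 K$ be a $2$-sum of $2$-connected cubic graphs $H$ and $K$, where $K$ is $3$-edge-colourable. Then $\pi(G)\ge 5$ if and only if $\pi(H)\ge 5$.
   Context: Graphs are finite; loops and multiple edges are allowed. For a bridgeless cubic graph $G$, the perfect matching index $\pi(G)$ is the smallest number of perfect matchings of $G$ whose union is $E(G)$. A $2$-sum $H\oplus_2 K$ with distinguished edges $e\in E(H)$, $f\in E(K)$ is obtained by deleting $e$ and $f$ and joining the two $2$-valent vertices of $H-e$ to the two $2$-valent vertices of $K-f$ by two new independent edges. *)

theory Defs
  imports Main
begin

text \<open>Finite multigraphs with loops and multiple edges. Each edge has an (unordered)
  pair of ends, stored as an ordered pair; a loop has equal ends.\<close>

record ('v, 'e) mgraph =
  verts :: "'v set"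
  edges :: "'e set"
  ends  :: "'e \<Rightarrow> 'v \<times> 'v"

definition mgraph :: "('v, 'e) mgraph \<Rightarrow> bool" where
  "mgraph G \<longleftrightarrow> finite (verts G) \<and> finite (edges G) \<and>
     (\<forall>e \<in> edges G. fst (ends G e) \<in> verts G \<and> snd (ends G e) \<in> verts G)"

definition incident :: "('v, 'e) mgraph \<Rightarrow> 'v \<Rightarrow> 'e \<Rightarrow> bool" where
  "incident G v e \<longleftrightarrow> fst (ends G e) = v \<or> snd (ends G e) = v"

definition is_loop :: "('v, 'e) mgraph \<Rightarrow> 'e \<Rightarrow> bool" where
  "is_loop G e \<longleftrightarrow> fst (ends G e) = snd (ends G e)"

text \<open>Degree: a loop contributes 2.\<close>
definition degree :: "('v, 'e) mgraph \<Rightarrow> 'v \<Rightarrow> nat" where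
  "degree G v = card {e \<in> edges G. fst (ends G e) = v} + card {e \<in> edges G. snd (ends G e) = v}"

definition cubic :: "('v, 'e) mgraph \<Rightarrow> bool" where
  "cubic G \<longleftrightarrow> mgraph G \<and> (\<forall>v \<in> verts G. degree G v = 3)"

definition adj_rel :: "('v, 'e) mgraph \<Rightarrow> ('v \<times> 'v) set" where
  "adj_rel G = {(u, v). \<exists>e \<in> edges G. ends G e = (u, v) \<or> ends G e = (v, u)}"

definition connected :: "('v, 'e) mgraph \<Rightarrow> bool" where
  "connected G \<longleftrightarrow> verts G \<noteq> {} \<and> (\<forall>u \<in> verts G. \<forall>v \<in> verts G. (u, v) \<in> (adj_rel G)\<^sup>*)"

definition del_vertex :: "('v, 'e) mgraph \<Rightarrow> 'v \<Rightarrow> ('v, 'e) mgraph" where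
  "del_vertex G v = \<lparr> verts = verts G - {v}, edges = {e \<in> edges G. \<not> incident G v e},
                      ends = ends G \<rparr>"

text \<open>2-connected: connected, at least two vertices, no cut vertex, and no loops
  (a loop in a graph with an edge elsewhere makes it separable).\<close>
definition two_connected :: "('v, 'e) mgraph \<Rightarrow> bool" where
  "two_connected G \<longleftrightarrow> connected G \<and> card (verts G) \<ge> 2 \<and>
     (\<forall>e \<in> edges G. \<not> is_loop G e) \<and>
     (\<forall>v \<in> verts G. connected (del_vertex G v))"

definition perfect_matching :: "('v, 'e) mgraph \<Rightarrow> 'e set \<Rightarrow> bool" where
  "perfect_matching G M \<longleftrightarrow> M \<subseteq> edges G \<and> (\<forall>e \<in> M. \<not> is_loop G e) \<and>
     (\<forall>v \<in> verts G. card {e \<in> M. incident G v e} = 1)"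

definition pm_index :: "('v, 'e) mgraph \<Rightarrow> nat" where
  "pm_index G = (LEAST k. \<exists>Ms. finite Ms \<and> card Ms = k \<and>
      (\<forall>M \<in> Ms. perfect_matching G M) \<and> \<Union> Ms = edges G)"

definition three_edge_colourable :: "('v, 'e) mgraph \<Rightarrow> bool" where
  "three_edge_colourable G \<longleftrightarrow> (\<exists>c :: 'e \<Rightarrow> nat. (\<forall>e \<in> edges G. c e < 3 \<and> \<not> is_loop G e) \<and>
     (\<forall>e \<in> edges G. \<forall>e' \<in> edges G. e \<noteq> e' \<and> (\<exists>v. incident G v e \<and> incident G v e')
        \<longrightarrow> c e \<noteq> c e'))"

definition two_sum :: "('v, 'e) mgraph \<Rightarrow> 'e \<Rightarrow> ('w, 'f) mgraph \<Rightarrow> 'f \<Rightarrow> bool \<Rightarrow>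
    ('v + 'w, ('e + 'f) + bool) mgraph" where
  "two_sum H e K f s =
    (let (a, b) = ends H e; (c, d) = ends K f in
     \<lparr> verts = Inl ` verts H \<union> Inr ` verts K,
       edges = Inl ` (Inl ` (edges H - {e}) \<union> Inr ` (edges K - {f})) \<union> {Inr True, Inr False},
       ends = (\<lambda>x. case x of
                Inl (Inl h) \<Rightarrow> map_prod Inl Inl (ends H h)
              | Inl (Inr k) \<Rightarrow> map_prod Inr Inr (ends K k)
              | Inr True \<Rightarrow> (Inl a, Inr (if s then c else d))
              | Inr False \<Rightarrow> (Inl b, Inr (if s then d else c))) \<rparr>)"

end

(*
  A perfect matching N of the 2-sum G contains both new edges or neither: each vertex of H
  is matched once, so |V(H)| = 2 |N restricted to H| + |N among the new edges|, and |V(H)| is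
  even because H is cubic. Hence N traces a perfect matching of H (the new edges becoming e),
  and a cover of G by k perfect matchings gives one of H by at most k.
  Conversely, take the three colour classes of K. Glue every matching of a cover of H that
  contains e to the class of f; at an end of e the other two edges lie in two distinct
  matchings of the cover avoiding e, and these receive the two remaining classes, so the
  glued matchings cover G.
*)
theory Submission
  imports Defs
begin

lemma Least_eq_Least_if_dominated:
  fixes P Q :: "nat \<Rightarrow> bool"
  assumes PQ: "\<And>k. P k \<Longrightarrow> Q k" and QP: "\<And>k. Q k \<Longrightarrow> \<exists>j\<le>k. P j"
  shows "Least P = Least Q"
proof (cases "\<exists>k. P k")
  case True
  then have "Q (Least P)" using PQ LeastI_ex by blast
  then have le: "Least Q \<le> Least P" by (rule Least_le)
  obtain j where "j \<le> Least Q" "P j" using QP LeastI_ex \<open>Q (Least P)\<close> by blast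
  then have "Least P \<le> Least Q" using Least_le[of P j] by linarith
  with le show ?thesis by simp
next
  case False
  then have "P = Q" using QP by blast
  then show ?thesis by simp
qed

lemma card_fibres_sum:
  assumes "finite N" and "finite S"
  shows "card {x\<in>N. g x \<in> S} = (\<Sum>v\<in>S. card {x\<in>N. g x = v})"
proof -
  have "card {x\<in>N. g x \<in> S} = card (\<Union>v\<in>S. {x\<in>N. g x = v})"
    by (rule arg_cong[where f = card]) auto
  also have "\<dots> = (\<Sum>v\<in>S. card {x\<in>N. g x = v})"
    using assms by (intro card_UN_disjoint) auto
  finally show ?thesis .
qed

lemma card_incident_split:
  assumes "finite N" and "\<forall>x\<in>N. \<not> is_loop G x"
  shows "card {x\<in>N. incident G v x}
       = card {x\<in>N. fst (ends G x) = v} + card {x\<in>N. snd (ends G x) = v}"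
proof -
  have "{x\<in>N. incident G v x} = {x\<in>N. fst (ends G x) = v} \<union> {x\<in>N. snd (ends G x) = v}"
    by (auto simp: incident_def)
  moreover have "{x\<in>N. fst (ends G x) = v} \<inter> {x\<in>N. snd (ends G x) = v} = {}"
    using assms(2) by (auto simp: is_loop_def)
  ultimately show ?thesis using assms(1) by (simp add: card_Un_disjoint)
qed

lemma degree_eq_card_incident:
  assumes "finite (edges G)" and "\<forall>x\<in>edges G. \<not> is_loop G x"
  shows "degree G v = card {x\<in>edges G. incident G v x}"
  using card_incident_split[OF assms] by (simp add: degree_def)

lemma even_card_verts_if_cubic:
  assumes "cubic G"
  shows "even (card (verts G))"
proof -
  have G: "finite (verts G)" "finite (edges G)"
    "\<forall>x\<in>edges G. fst (ends G x) \<in> verts G \<and> snd (ends G x) \<in> verts G"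
    using assms by (auto simp: cubic_def mgraph_def)
  have "3 * card (verts G) = (\<Sum>v\<in>verts G. degree G v)"
    using assms by (simp add: cubic_def)
  also have "\<dots> = card {x\<in>edges G. fst (ends G x) \<in> verts G}
                 + card {x\<in>edges G. snd (ends G x) \<in> verts G}"
    using G by (simp add: degree_def sum.distrib card_fibres_sum)
  also have "\<dots> = 2 * card (edges G)"
  proof -
    have "{x\<in>edges G. fst (ends G x) \<in> verts G} = edges G"
      and "{x\<in>edges G. snd (ends G x) \<in> verts G} = edges G"
      using G(3) by auto
    then show ?thesis by simp
  qed
  finally show ?thesis by presburger
qed

lemma card_eq_count_matched_ends:
  assumes "finite N" and "\<forall>x\<in>N. \<not> is_loop G x" and "finite S"
    and "\<forall>v\<in>S. card {x\<in>N. incident G v x} = 1"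
  shows "card S = card {x\<in>N. fst (ends G x) \<in> S} + card {x\<in>N. snd (ends G x) \<in> S}"
proof -
  have "card S = (\<Sum>v\<in>S. card {x\<in>N. incident G v x})"
    using assms(4) by simp
  also have "\<dots> = (\<Sum>v\<in>S. card {x\<in>N. fst (ends G x) = v} + card {x\<in>N. snd (ends G x) = v})"
    using card_incident_split[OF assms(1,2)] by simp
  also have "\<dots> = card {x\<in>N. fst (ends G x) \<in> S} + card {x\<in>N. snd (ends G x) \<in> S}"
    using assms(1,3) by (simp add: sum.distrib card_fibres_sum)
  finally show ?thesis .
qed

lemma perfect_matching_incident_unique:
  assumes "perfect_matching G M" and "v \<in> verts G"
    and "x \<in> M" "y \<in> M" "incident G v x" "incident G v y"
  shows "x = y"
proof -
  have "card {z\<in>M. incident G v z} = 1"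
    using assms(1,2) by (simp add: perfect_matching_def)
  then show ?thesis
    using assms(3-) by (metis (no_types, lifting) card_1_singletonE mem_Collect_eq singletonD)
qed

lemma colour_classes_perfect_matchings:
  fixes K :: "('v, 'f) mgraph"
  assumes "cubic K" and "three_edge_colourable K" and "f \<in> edges K"
  obtains L0 L1 L2 where "perfect_matching K L0" "perfect_matching K L1" "perfect_matching K L2"
    and "f \<in> L0" "f \<notin> L1" "f \<notin> L2" and "edges K \<subseteq> L0 \<union> L1 \<union> L2"
proof -
  obtain col :: "'f \<Rightarrow> nat" where col: "\<forall>x\<in>edges K. col x < 3 \<and> \<not> is_loop K x"
    and proper: "\<forall>x\<in>edges K. \<forall>y\<in>edges K. x \<noteq> y \<and> (\<exists>v. incident K v x \<and> incident K v y)
                   \<longrightarrow> col x \<noteq> col y"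
    using assms(2) unfolding three_edge_colourable_def by blast
  define C where "C j = {x\<in>edges K. col x = j}" for j
  have pm: "perfect_matching K (C j)" if "j < 3" for j
    unfolding perfect_matching_def
  proof (intro conjI ballI)
    show "C j \<subseteq> edges K" "\<And>x. x \<in> C j \<Longrightarrow> \<not> is_loop K x"
      using col by (auto simp: C_def)
  next
    fix v assume v: "v \<in> verts K"
    have fin: "finite (edges K)" using assms(1) by (simp add: cubic_def mgraph_def)
    let ?I = "{x\<in>edges K. incident K v x}"
    have "card ?I = 3"
      using degree_eq_card_incident[OF fin] col assms(1) v by (simp add: cubic_def)
    moreover have inj: "inj_on col ?I" using proper by (auto simp: inj_on_def)
    ultimately have "card (col ` ?I) = card {..<3::nat}" by (simp add: card_image)
    moreover have "col ` ?I \<subseteq> {..<3}" using col by auto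
    ultimately have "col ` ?I = {..<3}" by (intro card_subset_eq) simp_all
    then have "j \<in> col ` ?I" using \<open>j < 3\<close> by simp
    then obtain x where x: "x \<in> ?I" "col x = j" by blast
    then have "{y\<in>C j. incident K v y} = {x}" using inj by (auto simp: C_def inj_on_def)
    then show "card {y\<in>C j. incident K v y} = 1" by simp
  qed
  have "col f < 3" using col assms(3) by blast
  then have "card ({..<3} - {col f}) = 2" by (simp add: card_Diff_singleton)
  then obtain j1 j2 where j: "{..<3} - {col f} = {j1, j2}" "j1 \<noteq> j2" by (auto simp: card_2_iff)
  then have "j1 < 3" "j2 < 3" "j1 \<noteq> col f" "j2 \<noteq> col f" by blast+
  show ?thesis
  proof (rule that[of "C (col f)" "C j1" "C j2"])
    show "perfect_matching K (C (col f))" "perfect_matching K (C j1)" "perfect_matching K (C j2)"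
      using pm \<open>col f < 3\<close> \<open>j1 < 3\<close> \<open>j2 < 3\<close> by blast+
    show "f \<in> C (col f)" "f \<notin> C j1" "f \<notin> C j2"
      using assms(3) \<open>j1 \<noteq> col f\<close> \<open>j2 \<noteq> col f\<close> by (auto simp: C_def)
    show "edges K \<subseteq> C (col f) \<union> C j1 \<union> C j2"
    proof
      fix x assume "x \<in> edges K"
      then have "col x \<in> insert (col f) {j1, j2}" using col j(1) by auto
      then show "x \<in> C (col f) \<union> C j1 \<union> C j2" using \<open>x \<in> edges K\<close> by (auto simp: C_def)
    qed
  qed
qed

definition pm_cover :: "('v, 'e) mgraph \<Rightarrow> 'e set set \<Rightarrow> bool" where
  "pm_cover G Ms \<longleftrightarrow> finite Ms \<and> (\<forall>M\<in>Ms. perfect_matching G M) \<and> \<Union> Ms = edges G"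

lemma pm_index_eq_Least_pm_cover:
  "pm_index G = (LEAST k. \<exists>Ms. pm_cover G Ms \<and> card Ms = k)"
  unfolding pm_index_def pm_cover_def by (simp add: conj_commute conj_left_commute)

lemma pm_cover_two_avoiding:
  assumes "cubic H" and "\<forall>x\<in>edges H. \<not> is_loop H x" and "e \<in> edges H"
    and "pm_cover H Ms"
  shows "\<exists>M1\<in>Ms. \<exists>M2\<in>Ms. M1 \<noteq> M2 \<and> e \<notin> M1 \<and> e \<notin> M2"
proof -
  define a where "a = fst (ends H e)"
  have fin: "finite (edges H)" and a: "a \<in> verts H"
    using assms(1,3) by (auto simp: cubic_def mgraph_def a_def)
  let ?I = "{x\<in>edges H. incident H a x}"
  have e: "e \<in> ?I" using assms(3) by (simp add: incident_def a_def)
  have "card ?I = 3"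
    using degree_eq_card_incident[OF fin assms(2)] assms(1) a by (simp add: cubic_def)
  then have "card (?I - {e}) = 2" using e fin by simp
  then obtain x1 x2 where x: "x1 \<noteq> x2" "x1 \<in> ?I - {e}" "x2 \<in> ?I - {e}"
    by (auto simp: card_2_iff)
  have "x1 \<in> \<Union> Ms" "x2 \<in> \<Union> Ms" using x assms(4) by (auto simp: pm_cover_def)
  then obtain M1 M2 where M: "M1 \<in> Ms" "x1 \<in> M1" "M2 \<in> Ms" "x2 \<in> M2" by blast
  have pm: "perfect_matching H M1" "perfect_matching H M2"
    using M assms(4) by (auto simp: pm_cover_def)
  have inc: "incident H a e" "incident H a x1" "incident H a x2" and "x1 \<noteq> e" "x2 \<noteq> e"
    using e x by auto
  have "e \<notin> M1"
    using perfect_matching_incident_unique[OF pm(1) a _ M(2) inc(1,2)] \<open>x1 \<noteq> e\<close> by blast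
  moreover have "e \<notin> M2"
    using perfect_matching_incident_unique[OF pm(2) a _ M(4) inc(1,3)] \<open>x2 \<noteq> e\<close> by blast
  moreover have "M1 \<noteq> M2"
    using perfect_matching_incident_unique[OF pm(1) a M(2) _ inc(2,3)] M(4) x(1) by blast
  ultimately show ?thesis using M by blast
qed

lemma sum_sum_bool_cases:
  obtains (left) h where "x = Inl (Inl h)" | (right) k where "x = Inl (Inr k)"
    | (conn1) "x = Inr True" | (conn2) "x = Inr False"
  by (metis (full_types) sum.exhaust)

text \<open>The new edges of the 2-sum are Inr True and Inr False; the trace of an edge set of G on
  either summand replaces them by e, resp. f. Only Inr True is consulted, which is enough because
  a perfect matching of G contains both new edges or neither.\<close>

definition left_part :: "'e \<Rightarrow> (('e + 'f) + bool) set \<Rightarrow> 'e set" where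
  "left_part e N = {h. Inl (Inl h) \<in> N} \<union> (if Inr True \<in> N then {e} else {})"

definition right_part :: "'f \<Rightarrow> (('e + 'f) + bool) set \<Rightarrow> 'f set" where
  "right_part f N = {k. Inl (Inr k) \<in> N} \<union> (if Inr True \<in> N then {f} else {})"

definition glue :: "'e \<Rightarrow> 'f \<Rightarrow> 'e set \<Rightarrow> 'f set \<Rightarrow> (('e + 'f) + bool) set" where
  "glue e f M L = Inl ` Inl ` (M - {e}) \<union> Inl ` Inr ` (L - {f})
     \<union> (if e \<in> M then {Inr True, Inr False} else {})"

lemma left_part_glue: "left_part e (glue e f M L) = M"
  by (auto simp: left_part_def glue_def)

lemma right_part_glue: "(e \<in> M \<longleftrightarrow> f \<in> L) \<Longrightarrow> right_part f (glue e f M L) = L"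
  by (auto simp: right_part_def glue_def)

locale two_summands =
  fixes H :: "('v, 'e) mgraph" and e :: 'e and a b :: 'v
    and K :: "('w, 'f) mgraph" and f :: 'f and c d :: 'w
    and s :: bool
  assumes ends_e: "ends H e = (a, b)" and ends_f: "ends K f = (c, d)"
    and e_edge: "e \<in> edges H" and f_edge: "f \<in> edges K"
    and a_ne_b: "a \<noteq> b" and c_ne_d: "c \<noteq> d"
begin

abbreviation G :: "('v + 'w, ('e + 'f) + bool) mgraph" where
  "G \<equiv> two_sum H e K f s"

lemma verts_G [simp]: "verts G = Inl ` verts H \<union> Inr ` verts K"
  by (simp add: two_sum_def ends_e ends_f)

lemma edges_G:
  "edges G = Inl ` (Inl ` (edges H - {e}) \<union> Inr ` (edges K - {f})) \<union> {Inr True, Inr False}"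
  by (simp add: two_sum_def ends_e ends_f)

lemma mem_edges_G [simp]:
  "Inl (Inl h) \<in> edges G \<longleftrightarrow> h \<in> edges H \<and> h \<noteq> e"
  "Inl (Inr k) \<in> edges G \<longleftrightarrow> k \<in> edges K \<and> k \<noteq> f"
  "Inr t \<in> edges G"
  by (cases t; auto simp: edges_G)+

lemma ends_G [simp]:
  "ends G (Inl (Inl h)) = map_prod Inl Inl (ends H h)"
  "ends G (Inl (Inr k)) = map_prod Inr Inr (ends K k)"
  "ends G (Inr True) = (Inl a, Inr (if s then c else d))"
  "ends G (Inr False) = (Inl b, Inr (if s then d else c))"
  by (simp_all add: two_sum_def ends_e ends_f)

lemma incident_G [simp]:
  "incident G (Inl v) (Inl (Inl h)) \<longleftrightarrow> incident H v h"
  "\<not> incident G (Inr w) (Inl (Inl h))"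
  "\<not> incident G (Inl v) (Inl (Inr k))"
  "incident G (Inr w) (Inl (Inr k)) \<longleftrightarrow> incident K w k"
  "incident G (Inl v) (Inr True) \<longleftrightarrow> v = a"
  "incident G (Inl v) (Inr False) \<longleftrightarrow> v = b"
  "incident G (Inr w) (Inr True) \<longleftrightarrow> w = (if s then c else d)"
  "incident G (Inr w) (Inr False) \<longleftrightarrow> w = (if s then d else c)"
  by (auto simp: incident_def)

lemma is_loop_G [simp]:
  "is_loop G (Inl (Inl h)) \<longleftrightarrow> is_loop H h"
  "is_loop G (Inl (Inr k)) \<longleftrightarrow> is_loop K k"
  "\<not> is_loop G (Inr t)"
  by (cases t; auto simp: is_loop_def)+

lemma incident_e_iff: "incident H v e \<longleftrightarrow> v = a \<or> v = b"
  using ends_e by (auto simp: incident_def)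

lemma incident_f_iff: "incident K w f \<longleftrightarrow> w = c \<or> w = d"
  using ends_f by (auto simp: incident_def)

lemma card_incident_Inl:
  assumes "Inl (Inl e) \<notin> X" and "Inr True \<in> X \<longleftrightarrow> Inr False \<in> X"
  shows "card {x\<in>X. incident G (Inl v) x} = card {h\<in>left_part e X. incident H v h}"
proof -
  define p :: "('e + 'f) + bool \<Rightarrow> 'e" where
    "p x = (case x of Inl (Inl h) \<Rightarrow> h | _ \<Rightarrow> e)" for x
  let ?A = "{x\<in>X. incident G (Inl v) x}"
  have inj: "inj_on p ?A"
  proof (rule inj_onI)
    fix x y assume "x \<in> ?A" "y \<in> ?A" "p x = p y"
    then show "x = y" using assms(1) a_ne_b
      by (cases x rule: sum_sum_bool_cases; cases y rule: sum_sum_bool_cases) (auto simp: p_def)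
  qed
  have img: "p ` ?A = {h\<in>left_part e X. incident H v h}"
  proof
    show "p ` ?A \<subseteq> {h\<in>left_part e X. incident H v h}"
    proof
      fix h assume "h \<in> p ` ?A"
      then obtain x where "x \<in> ?A" "h = p x" by blast
      then show "h \<in> {h\<in>left_part e X. incident H v h}"
        using assms(2) by (cases x rule: sum_sum_bool_cases)
          (auto simp: p_def left_part_def incident_e_iff)
    qed
  next
    show "{h\<in>left_part e X. incident H v h} \<subseteq> p ` ?A"
    proof
      fix h assume h: "h \<in> {h\<in>left_part e X. incident H v h}"
      show "h \<in> p ` ?A"
      proof (cases "Inl (Inl h) \<in> X")
        case True
        then have "Inl (Inl h) \<in> ?A" "h = p (Inl (Inl h))" using h by (simp_all add: p_def)
        then show ?thesis by (rule image_eqI[rotated])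
      next
        case False
        then have "h = e" "Inr True \<in> X" "Inr False \<in> X" "v = a \<or> v = b"
          using h assms(2) by (auto simp: left_part_def incident_e_iff split: if_splits)
        then have "Inr True \<in> ?A \<or> Inr False \<in> ?A" "h = p (Inr True)" "h = p (Inr False)"
          by (auto simp: p_def)
        then show ?thesis using image_eqI[of h p] by blast
      qed
    qed
  qed
  show ?thesis using card_image[OF inj] unfolding img by simp
qed

lemma card_incident_Inr:
  assumes "Inl (Inr f) \<notin> X" and "Inr True \<in> X \<longleftrightarrow> Inr False \<in> X"
  shows "card {x\<in>X. incident G (Inr w) x} = card {k\<in>right_part f X. incident K w k}"
proof -
  define q :: "('e + 'f) + bool \<Rightarrow> 'f" where
    "q x = (case x of Inl (Inr k) \<Rightarrow> k | _ \<Rightarrow> f)" for x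
  let ?A = "{x\<in>X. incident G (Inr w) x}"
  have inj: "inj_on q ?A"
  proof (rule inj_onI)
    fix x y assume "x \<in> ?A" "y \<in> ?A" "q x = q y"
    then show "x = y" using assms(1) c_ne_d
      by (cases x rule: sum_sum_bool_cases; cases y rule: sum_sum_bool_cases)
        (auto simp: q_def split: if_splits)
  qed
  have img: "q ` ?A = {k\<in>right_part f X. incident K w k}"
  proof
    show "q ` ?A \<subseteq> {k\<in>right_part f X. incident K w k}"
    proof
      fix k assume "k \<in> q ` ?A"
      then obtain x where "x \<in> ?A" "k = q x" by blast
      then show "k \<in> {k\<in>right_part f X. incident K w k}"
        using assms(2) by (cases x rule: sum_sum_bool_cases)
          (auto simp: q_def right_part_def incident_f_iff split: if_splits)
    qed
  next
    show "{k\<in>right_part f X. incident K w k} \<subseteq> q ` ?A"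
    proof
      fix k assume k: "k \<in> {k\<in>right_part f X. incident K w k}"
      show "k \<in> q ` ?A"
      proof (cases "Inl (Inr k) \<in> X")
        case True
        then have "Inl (Inr k) \<in> ?A" "k = q (Inl (Inr k))" using k by (simp_all add: q_def)
        then show ?thesis by (rule image_eqI[rotated])
      next
        case False
        then have "k = f" "Inr True \<in> X" "Inr False \<in> X" "w = c \<or> w = d"
          using k assms(2) by (auto simp: right_part_def incident_f_iff split: if_splits)
        then have "Inr True \<in> ?A \<or> Inr False \<in> ?A" "k = q (Inr True)" "k = q (Inr False)"
          by (auto simp: q_def)
        then show ?thesis using image_eqI[of k q] by blast
      qed
    qed
  qed
  show ?thesis using card_image[OF inj] unfolding img by simp
qed

lemma connectors_both_or_neither:
  assumes "cubic H" and "finite (edges K)" and "perfect_matching G N"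
  shows "Inr True \<in> N \<longleftrightarrow> Inr False \<in> N"
proof -
  have H: "finite (verts H)" "finite (edges H)"
    "\<forall>h\<in>edges H. fst (ends H h) \<in> verts H \<and> snd (ends H h) \<in> verts H"
    using assms(1) by (auto simp: cubic_def mgraph_def)
  have ab: "a \<in> verts H" "b \<in> verts H" using H(3) e_edge ends_e by (metis fst_conv snd_conv)+
  have NG: "N \<subseteq> edges G" and N: "\<forall>x\<in>N. \<not> is_loop G x"
    and matched: "\<forall>u\<in>verts G. card {x\<in>N. incident G u x} = 1"
    using assms(3) by (auto simp: perfect_matching_def)
  have fin: "finite N" using NG H(2) assms(2) by (simp add: edges_G finite_subset)
  let ?S = "Inl ` verts H :: ('v + 'w) set"
  let ?NH = "{x\<in>N. \<exists>h. x = Inl (Inl h)}" and ?NC = "N \<inter> {Inr True, Inr False}"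
  have side: "fst (ends G x) \<in> ?S \<longleftrightarrow> (\<exists>h. x = Inl (Inl h)) \<or> x \<in> {Inr True, Inr False}"
    "snd (ends G x) \<in> ?S \<longleftrightarrow> (\<exists>h. x = Inl (Inl h))" if "x \<in> edges G" for x
    using that H(3) ab by (cases x rule: sum_sum_bool_cases; force)+
  have "card (verts H) = card ?S" by (simp add: card_image)
  also have "\<dots> = card {x\<in>N. fst (ends G x) \<in> ?S} + card {x\<in>N. snd (ends G x) \<in> ?S}"
    using card_eq_count_matched_ends[OF fin N] H(1) matched by simp
  also have "{x\<in>N. fst (ends G x) \<in> ?S} = ?NH \<union> ?NC" using side NG by blast
  also have "{x\<in>N. snd (ends G x) \<in> ?S} = ?NH" using side NG by blast
  also have "card (?NH \<union> ?NC) = card ?NH + card ?NC" using fin by (intro card_Un_disjoint) auto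
  finally have "even (card ?NC)" using even_card_verts_if_cubic[OF assms(1)] by presburger
  then show ?thesis by (cases "Inr True \<in> N"; cases "Inr False \<in> N") auto
qed

lemma perfect_matching_left_part:
  assumes "cubic H" and "finite (edges K)" and "perfect_matching G N"
  shows "perfect_matching H (left_part e N)"
  unfolding perfect_matching_def
proof (intro conjI ballI)
  have NG: "N \<subseteq> edges G" using assms(3) by (simp add: perfect_matching_def)
  then show "left_part e N \<subseteq> edges H" using e_edge by (auto simp: left_part_def)
  fix h assume "h \<in> left_part e N"
  then have "h = e \<or> Inl (Inl h) \<in> N" by (auto simp: left_part_def split: if_splits)
  then show "\<not> is_loop H h"
    using assms(3) ends_e a_ne_b by (auto simp: perfect_matching_def is_loop_def)
next
  fix v assume "v \<in> verts H"
  have "Inl (Inl e) \<notin> N" using assms(3) by (auto simp: perfect_matching_def)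
  then have "card {h\<in>left_part e N. incident H v h} = card {x\<in>N. incident G (Inl v) x}"
    using card_incident_Inl connectors_both_or_neither[OF assms] by simp
  also have "\<dots> = 1" using assms(3) \<open>v \<in> verts H\<close> by (simp add: perfect_matching_def)
  finally show "card {h\<in>left_part e N. incident H v h} = 1" .
qed

lemma perfect_matching_glue:
  assumes M: "perfect_matching H M" and L: "perfect_matching K L" and "e \<in> M \<longleftrightarrow> f \<in> L"
  shows "perfect_matching G (glue e f M L)"
  unfolding perfect_matching_def
proof (intro conjI ballI)
  show "glue e f M L \<subseteq> edges G"
    using M L by (auto simp: glue_def perfect_matching_def)
  show "\<not> is_loop G x" if "x \<in> glue e f M L" for x
    using that M L by (auto simp: glue_def perfect_matching_def split: if_splits)
next
  have no_old: "Inl (Inl e) \<notin> glue e f M L" "Inl (Inr f) \<notin> glue e f M L"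
    and conn: "Inr True \<in> glue e f M L \<longleftrightarrow> Inr False \<in> glue e f M L"
    by (auto simp: glue_def)
  fix u assume "u \<in> verts G"
  then consider v where "u = Inl v" "v \<in> verts H" | w where "u = Inr w" "w \<in> verts K" by auto
  then show "card {x\<in>glue e f M L. incident G u x} = 1"
  proof cases
    case 1
    then show ?thesis using card_incident_Inl[OF no_old(1) conn] M
      by (simp add: left_part_glue perfect_matching_def)
  next
    case 2
    then show ?thesis using card_incident_Inr[OF no_old(2) conn] L assms(3)
      by (simp add: right_part_glue perfect_matching_def)
  qed
qed

lemma pm_cover_left_part:
  assumes "cubic H" and "finite (edges K)" and "pm_cover G Ns"
  shows "pm_cover H (left_part e ` Ns)"
  unfolding pm_cover_def
proof (intro conjI)
  show "finite (left_part e ` Ns)" using assms(3) by (simp add: pm_cover_def)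
  show pm: "\<forall>M\<in>left_part e ` Ns. perfect_matching H M"
    using perfect_matching_left_part[OF assms(1,2)] assms(3) by (auto simp: pm_cover_def)
  show "\<Union> (left_part e ` Ns) = edges H"
  proof
    show "\<Union> (left_part e ` Ns) \<subseteq> edges H" using pm by (auto simp: perfect_matching_def)
  next
    have covered: "\<exists>N\<in>Ns. x \<in> N" if "x \<in> edges G" for x
      using that assms(3) by (auto simp: pm_cover_def)
    show "edges H \<subseteq> \<Union> (left_part e ` Ns)"
    proof
      fix h assume h: "h \<in> edges H"
      have "(if h = e then Inr True else Inl (Inl h)) \<in> edges G" using h by simp
      then obtain N where "N \<in> Ns" "(if h = e then Inr True else Inl (Inl h)) \<in> N"
        using covered by blast
      then show "h \<in> \<Union> (left_part e ` Ns)" by (auto simp: left_part_def split: if_splits)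
    qed
  qed
qed

lemma pm_cover_glue:
  assumes "cubic H" and "\<forall>x\<in>edges H. \<not> is_loop H x"
    and "cubic K" and "three_edge_colourable K" and "pm_cover H Ms"
  obtains Ns where "pm_cover G Ns" and "card Ns = card Ms"
proof -
  obtain L0 L1 L2 where colour_pm: "perfect_matching K L0" "perfect_matching K L1" "perfect_matching K L2"
    and f_in: "f \<in> L0" "f \<notin> L1" "f \<notin> L2" and cover: "edges K \<subseteq> L0 \<union> L1 \<union> L2"
    using colour_classes_perfect_matchings[OF assms(3,4) f_edge] by blast
  obtain M1 M2 where M12: "M1 \<in> Ms" "M2 \<in> Ms" "M1 \<noteq> M2" "e \<notin> M1" "e \<notin> M2"
    using pm_cover_two_avoiding[OF assms(1,2) e_edge assms(5)] by blast
  obtain M0 where M0: "M0 \<in> Ms" "e \<in> M0" using e_edge assms(5) by (auto simp: pm_cover_def)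
  define L where "L M = (if e \<in> M then L0 else if M = M2 then L2 else L1)" for M
  define N where "N M = glue e f M (L M)" for M
  have L_pm: "perfect_matching K (L M)" and e_iff_f: "e \<in> M \<longleftrightarrow> f \<in> L M" for M
    using colour_pm f_in by (simp_all add: L_def)
  have pm: "perfect_matching G (N M)" if "M \<in> Ms" for M
  proof -
    have "perfect_matching H M" using that assms(5) by (simp add: pm_cover_def)
    then show ?thesis unfolding N_def using L_pm e_iff_f by (rule perfect_matching_glue)
  qed
  have "inj_on N Ms" by (rule inj_on_inverseI[of _ "left_part e"]) (simp add: N_def left_part_glue)
  then have "card (N ` Ms) = card Ms" by (rule card_image)
  moreover have "pm_cover G (N ` Ms)"
    unfolding pm_cover_def
  proof (intro conjI)
    show "finite (N ` Ms)" using assms(5) by (simp add: pm_cover_def)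
    show "\<forall>N'\<in>N ` Ms. perfect_matching G N'" using pm by blast
    show "\<Union> (N ` Ms) = edges G"
    proof
      show "\<Union> (N ` Ms) \<subseteq> edges G" using pm unfolding perfect_matching_def by blast
    next
      show "edges G \<subseteq> \<Union> (N ` Ms)"
      proof
        fix x assume x: "x \<in> edges G"
        then show "x \<in> \<Union> (N ` Ms)"
        proof (cases x rule: sum_sum_bool_cases)
          case (left h)
          then have "h \<in> edges H" "h \<noteq> e" using x by auto
          then obtain M where "M \<in> Ms" "h \<in> M" using assms(5) by (auto simp: pm_cover_def)
          then have "x \<in> N M" using left \<open>h \<noteq> e\<close> by (simp add: N_def glue_def)
          then show ?thesis using \<open>M \<in> Ms\<close> by blast
        next
          case (right k)
          then have "k \<in> edges K" "k \<noteq> f" using x by auto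
          then have "k \<in> L M0 \<or> k \<in> L M1 \<or> k \<in> L M2" using cover M0 M12 by (auto simp: L_def)
          then obtain M where "M \<in> Ms" "k \<in> L M" using M0 M12 by blast
          then have "x \<in> N M" using right \<open>k \<noteq> f\<close> by (simp add: N_def glue_def)
          then show ?thesis using \<open>M \<in> Ms\<close> by blast
        next
          case conn1
          then have "x \<in> N M0" using M0 by (simp add: N_def glue_def)
          then show ?thesis using M0 by blast
        next
          case conn2
          then have "x \<in> N M0" using M0 by (simp add: N_def glue_def)
          then show ?thesis using M0 by blast
        qed
      qed
    qed
  qed
  ultimately show ?thesis using that by blast
qed

lemma pm_index_two_sum:
  assumes "cubic H" and "\<forall>x\<in>edges H. \<not> is_loop H x"
    and "cubic K" and "three_edge_colourable K"
  shows "pm_index G = pm_index H"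
proof -
  have "finite (edges K)" using assms(3) by (simp add: cubic_def mgraph_def)
  have "(LEAST k. \<exists>Ms. pm_cover H Ms \<and> card Ms = k) = (LEAST k. \<exists>Ns. pm_cover G Ns \<and> card Ns = k)"
  proof (rule Least_eq_Least_if_dominated)
    show "\<exists>Ns. pm_cover G Ns \<and> card Ns = k" if "\<exists>Ms. pm_cover H Ms \<and> card Ms = k" for k
      using that pm_cover_glue[OF assms] by metis
    show "\<exists>j\<le>k. \<exists>Ms. pm_cover H Ms \<and> card Ms = j" if "\<exists>Ns. pm_cover G Ns \<and> card Ns = k" for k
      using that pm_cover_left_part[OF assms(1) \<open>finite (edges K)\<close>] card_image_le
      by (metis pm_cover_def)
  qed
  then show ?thesis by (simp add: pm_index_eq_Least_pm_cover)
qed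

end

theorem lemma6p4:
  fixes H :: "('v, 'e) mgraph" and K :: "('w, 'f) mgraph"
    and e :: 'e and f :: 'f and s :: bool
  assumes "cubic H" and "cubic K"
    and "two_connected H" and "two_connected K"
    and "three_edge_colourable K"
    and "e \<in> edges H" and "f \<in> edges K"
  shows "5 \<le> pm_index (two_sum H e K f s) \<longleftrightarrow> 5 \<le> pm_index H"
proof -
  obtain a b where ab: "ends H e = (a, b)" by fastforce
  obtain c d where cd: "ends K f = (c, d)" by fastforce
  have H_loopless: "\<forall>x\<in>edges H. \<not> is_loop H x" and "\<forall>x\<in>edges K. \<not> is_loop K x"
    using assms(3,4) by (simp_all add: two_connected_def)
  then have "a \<noteq> b" and "c \<noteq> d" using ab cd assms(6,7) by (metis fst_conv snd_conv is_loop_def)+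
  then interpret two_summands H e a b K f c d s
    using ab cd assms(6,7) by unfold_locales
  show ?thesis using pm_index_two_sum[OF assms(1) H_loopless assms(2,5)] by simp
qed

end
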